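(* Fix integers $1\le j<k$ and constants $0<\delta<1/6$ and $c>0$. Let $\varepsilon=\varepsilon(n)$ satisfy $\varepsilon\to0$, $\varepsilon^3n^j\to\infty$, $\varepsilon^2n^{1-2\delta}\to\infty$, let $p=(1+\varepsilon)p_0$ with $p_0=\frac{1}{(\binom{k}{j}-1)\binom{n}{k-j}}$, and let $\varepsilon_*=\varepsilon_*(n)$ satisfy $n^{-1/2+\delta}\ll\varepsilon_*\ll\varepsilon$. Let $\mathcal{T}_*$ be the Galton–Watson branching process starting from one individual in which each individual independently has $\left(\binom{k}{j}-1\right)\cdot Z$ children, where $Z\sim\mathrm{Bi}\!\left((1-\varepsilon_* )\binom{n}{k-j},p\right)$. Let $x:=(j-1+\delta+c)\varepsilon^{-1}\log n$ and let $|\mathcal{T}_*(x)|$ be the size of generation $x$ of $\mathcal{T}_*$. Then, for $n$ sufficiently large, $\Pr\big(|\mathcal{T}_*(x)|\ge n^{j-1+\delta}\big)\ge\varepsilon/n^{c}$.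
   Context: Floors and ceilings are omitted where irrelevant (e.g. $x$ and $(1-\varepsilon_* )\binom{n}{k-j}$ are rounded to integers). The notation $a\cdot Z$ means the random variable taking value $ai$ with probability $\Pr(Z=i)$. *)

theory Defs
  imports "HOL-Probability.Probability"
begin

fun iid_sum_pmf :: "nat pmf \<Rightarrow> nat \<Rightarrow> nat pmf" where
  "iid_sum_pmf d 0 = return_pmf 0"
| "iid_sum_pmf d (Suc m) = bind_pmf d (\<lambda>a. map_pmf (\<lambda>b. a + b) (iid_sum_pmf d m))"

text \<open>Law of the size of generation t of a Galton-Watson process started from one
  individual, with offspring distribution d.\<close>
fun gw_generation :: "nat pmf \<Rightarrow> nat \<Rightarrow> nat pmf" where
  "gw_generation d 0 = return_pmf 1"
| "gw_generation d (Suc t) = bind_pmf (gw_generation d t) (iid_sum_pmf d)"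

definition scale_pmf :: "nat \<Rightarrow> nat pmf \<Rightarrow> nat pmf" where
  "scale_pmf a Z = map_pmf (\<lambda>i. a * i) Z"

end

theory Submission
  imports Defs "HOL-Real_Asymp.Real_Asymp"
begin

text \<open>A second-moment argument. If the offspring law has mean \<mu> > 1 and variance at most
  a\<mu>, then generation t has mean \<mu>^t and, solving the linear recursion for its second
  moment, second moment at most \<mu>^(2t) (\<mu> - 1 + a)/(\<mu> - 1); by Paley-Zygmund it exceeds
  \<mu>^t/2 with probability at least (\<mu> - 1)/(4(\<mu> - 1 + a)). For the offspring law
  (C - 1) Bi(N, p) with C = binom(k, j) one may take a = C - 1, and since both \<epsilon>* and
  1/binom(n, k - j) are o(\<epsilon>), \<mu> \<ge> 1 + (1 - \<eta>)\<epsilon>. This gives probability at least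
  \<epsilon>/(4 + 8(C - 1)) \<ge> \<epsilon>/n^c, while ln \<mu> \<ge> (1 - 2\<eta>)\<epsilon> makes \<mu>^x \<ge> 2 n^(j-1+\<delta>) as soon as
  \<eta> \<le> c/(4(j - 1 + \<delta> + c)).\<close>

abbreviation mean_pmf :: "nat pmf \<Rightarrow> real" where
  "mean_pmf q \<equiv> measure_pmf.expectation q real"

abbreviation moment2_pmf :: "nat pmf \<Rightarrow> real" where
  "moment2_pmf q \<equiv> measure_pmf.expectation q (\<lambda>x. real x ^ 2)"

definition variance_pmf :: "nat pmf \<Rightarrow> real" where
  "variance_pmf q = moment2_pmf q - mean_pmf q ^ 2"

lemma finite_set_pmf_iid_sum_pmf:
  "finite (set_pmf d) \<Longrightarrow> finite (set_pmf (iid_sum_pmf d m))"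
  by (induction m) auto

lemma finite_set_pmf_gw_generation:
  "finite (set_pmf d) \<Longrightarrow> finite (set_pmf (gw_generation d t))"
  by (induction t) (auto intro: finite_set_pmf_iid_sum_pmf)

lemma expectation_bind_pmf_finite:
  fixes h :: "'b \<Rightarrow> real"
  assumes "finite (set_pmf p)" "\<And>x. x \<in> set_pmf p \<Longrightarrow> finite (set_pmf (f x))"
  shows "measure_pmf.expectation (bind_pmf p f) h =
         measure_pmf.expectation p (\<lambda>x. measure_pmf.expectation (f x) h)"
proof -
  have "measure_pmf.expectation (bind_pmf p f) h =
        (\<Sum>a\<in>set_pmf p. pmf p a *\<^sub>R measure_pmf.expectation (f a) h)"
    by (rule pmf_expectation_bind[OF assms(1)]) (use assms in auto)
  also have "\<dots> = measure_pmf.expectation p (\<lambda>x. measure_pmf.expectation (f x) h)"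
    by (rule integral_measure_pmf[symmetric]) (use assms in auto)
  finally show ?thesis .
qed

lemma expectation_iid_sum_pmf_Suc:
  fixes h :: "nat \<Rightarrow> real"
  assumes "finite (set_pmf d)"
  shows "measure_pmf.expectation (iid_sum_pmf d (Suc m)) h =
         measure_pmf.expectation d (\<lambda>a. measure_pmf.expectation (iid_sum_pmf d m) (\<lambda>b. h (a + b)))"
  using assms finite_set_pmf_iid_sum_pmf[OF assms] by (simp add: expectation_bind_pmf_finite)

lemma mean_le_moment2_pmf:
  assumes "finite (set_pmf q)"
  shows "mean_pmf q \<le> moment2_pmf q"
proof (rule integral_mono)
  fix x :: nat show "real x \<le> real x ^ 2" by (cases x) (auto simp: power2_eq_square)
qed (use assms in \<open>auto intro: integrable_measure_pmf_finite\<close>)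

lemma variance_pmf_nonneg:
  assumes "finite (set_pmf q)"
  shows "variance_pmf q \<ge> 0"
proof -
  have "measure_pmf.variance q real = variance_pmf q"
    unfolding variance_pmf_def
    by (rule measure_pmf.variance_eq) (use assms in \<open>auto intro: integrable_measure_pmf_finite\<close>)
  then show ?thesis using measure_pmf.variance_positive by metis
qed

lemma mean_iid_sum_pmf:
  assumes "finite (set_pmf d)"
  shows "mean_pmf (iid_sum_pmf d m) = m * mean_pmf d"
proof (induction m)
  case (Suc m)
  then show ?case
    using finite_set_pmf_iid_sum_pmf[OF assms, of m] assms
    by (subst expectation_iid_sum_pmf_Suc[OF assms])
       (simp add: integrable_measure_pmf_finite algebra_simps)
qed simp

lemma moment2_iid_sum_pmf:
  assumes "finite (set_pmf d)"
  shows "moment2_pmf (iid_sum_pmf d m) = m * variance_pmf d + (m * mean_pmf d) ^ 2"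
proof (induction m)
  case (Suc m)
  let ?B = "iid_sum_pmf d m"
  have fin: "finite (set_pmf ?B)" using finite_set_pmf_iid_sum_pmf[OF assms] .
  have "moment2_pmf (iid_sum_pmf d (Suc m)) =
        measure_pmf.expectation d (\<lambda>a. measure_pmf.expectation ?B
          (\<lambda>b. real a ^ 2 + 2 * real a * real b + real b ^ 2))"
    by (subst expectation_iid_sum_pmf_Suc[OF assms]) (simp add: power2_sum add_ac)
  also have "\<dots> = moment2_pmf d + 2 * mean_pmf d * mean_pmf ?B + moment2_pmf ?B"
    using assms fin by (simp add: integrable_measure_pmf_finite)
  finally show ?case
    using Suc mean_iid_sum_pmf[OF assms, of m] unfolding variance_pmf_def
    by (simp add: algebra_simps power2_eq_square)
qed simp

lemma expectation_gw_generation_Suc: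
  fixes h :: "nat \<Rightarrow> real"
  assumes "finite (set_pmf d)"
  shows "measure_pmf.expectation (gw_generation d (Suc t)) h =
         measure_pmf.expectation (gw_generation d t) (\<lambda>z. measure_pmf.expectation (iid_sum_pmf d z) h)"
  using assms finite_set_pmf_gw_generation[OF assms] finite_set_pmf_iid_sum_pmf[OF assms]
  by (simp add: expectation_bind_pmf_finite)

lemma mean_gw_generation:
  assumes "finite (set_pmf d)"
  shows "mean_pmf (gw_generation d t) = mean_pmf d ^ t"
proof (induction t)
  case (Suc t)
  then show ?case
    by (simp only: expectation_gw_generation_Suc[OF assms] mean_iid_sum_pmf[OF assms])
       (simp add: mult.commute)
qed simp

lemma moment2_gw_generation_Suc:
  assumes "finite (set_pmf d)"
  shows "moment2_pmf (gw_generation d (Suc t)) =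
         variance_pmf d * mean_pmf d ^ t + mean_pmf d ^ 2 * moment2_pmf (gw_generation d t)"
proof -
  let ?Z = "gw_generation d t"
  have "moment2_pmf (gw_generation d (Suc t)) =
        measure_pmf.expectation ?Z (\<lambda>z. variance_pmf d * real z + mean_pmf d ^ 2 * real z ^ 2)"
    by (simp only: expectation_gw_generation_Suc[OF assms] moment2_iid_sum_pmf[OF assms]
        power_mult_distrib mult.commute)
  also have "\<dots> = variance_pmf d * mean_pmf ?Z + mean_pmf d ^ 2 * moment2_pmf ?Z"
    using finite_set_pmf_gw_generation[OF assms] by (simp add: integrable_measure_pmf_finite)
  finally show ?thesis by (simp only: mean_gw_generation[OF assms])
qed

lemma moment2_gw_generation:
  assumes "finite (set_pmf d)" "mean_pmf d > 1"
  defines "\<mu> \<equiv> mean_pmf d" and "v \<equiv> variance_pmf d"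
  shows "moment2_pmf (gw_generation d t) = \<mu> ^ (2 * t) + v * (\<mu> ^ (2 * t) - \<mu> ^ t) / (\<mu> * (\<mu> - 1))"
proof (induction t)
  case (Suc t)
  have "\<mu> \<noteq> 0" "\<mu> - 1 \<noteq> 0" using assms(2) by (auto simp: \<mu>_def)
  then show ?case
    unfolding moment2_gw_generation_Suc[OF assms(1)] \<mu>_def[symmetric] v_def[symmetric] Suc
    by (simp add: field_simps power2_eq_square power_add)
qed simp

lemma paley_zygmund_pmf:
  assumes fin: "finite (set_pmf q)" and pos: "mean_pmf q > 0" and \<theta>: "0 \<le> \<theta>" "\<theta> < 1"
  shows "measure_pmf.prob q {m. real m \<ge> \<theta> * mean_pmf q} \<ge> (1 - \<theta>) ^ 2 * mean_pmf q ^ 2 / moment2_pmf q"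
proof -
  define A where "A = {m. real m \<ge> \<theta> * mean_pmf q}"
  define P where "P = measure_pmf.prob q A"
  have m2pos: "moment2_pmf q > 0" using mean_le_moment2_pmf[OF fin] pos by linarith
  define s where "s = moment2_pmf q / ((1 - \<theta>) * mean_pmf q)"
  have spos: "s > 0" using \<theta> pos m2pos by (simp add: s_def)
  \<comment> \<open>AM-GM on A gives x \<le> x^2/(2s) + s/2; this choice of s makes it as sharp as Cauchy-Schwarz.\<close>
  have pointwise: "real x \<le> \<theta> * mean_pmf q + real x ^ 2 / (2 * s) + s / 2 * indicator A x" for x
  proof (cases "x \<in> A")
    case True
    have "0 \<le> (real x - s) ^ 2 / (2 * s)" using spos by simp
    then have "real x \<le> real x ^ 2 / (2 * s) + s / 2" using spos
      by (simp add: power2_eq_square field_simps)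
    moreover have "0 \<le> \<theta> * mean_pmf q" using \<theta> pos by simp
    ultimately show ?thesis using True by simp
  next
    case False
    moreover have "0 \<le> real x ^ 2 / (2 * s)" using spos by simp
    ultimately show ?thesis unfolding A_def by auto
  qed
  have "mean_pmf q \<le> measure_pmf.expectation q
          (\<lambda>x. \<theta> * mean_pmf q + real x ^ 2 / (2 * s) + s / 2 * indicator A x)"
    using fin pointwise by (intro integral_mono integrable_measure_pmf_finite) auto
  also have "\<dots> = \<theta> * mean_pmf q + moment2_pmf q / (2 * s) + s / 2 * P"
    unfolding P_def using fin by (simp add: integrable_measure_pmf_finite)
  also have "moment2_pmf q / (2 * s) = (1 - \<theta>) * mean_pmf q / 2"
    using \<theta> m2pos by (simp add: s_def field_simps)
  finally have "(1 - \<theta>) * mean_pmf q / s \<le> P"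
    using spos by (simp add: field_simps)
  moreover have "(1 - \<theta>) * mean_pmf q / s = (1 - \<theta>) ^ 2 * mean_pmf q ^ 2 / moment2_pmf q"
    using \<theta> pos m2pos by (simp add: s_def field_simps power2_eq_square)
  ultimately show ?thesis unfolding P_def A_def by simp
qed

lemma gw_generation_prob_ge_half_mean:
  assumes fin: "finite (set_pmf d)" and supercritical: "mean_pmf d > 1"
    and variance: "variance_pmf d \<le> a * mean_pmf d"
  shows "measure_pmf.prob (gw_generation d t) {m. real m \<ge> mean_pmf d ^ t / 2}
           \<ge> (mean_pmf d - 1) / (4 * (mean_pmf d - 1 + a))"
proof -
  define \<mu> where "\<mu> = mean_pmf d"
  define v where "v = variance_pmf d"
  let ?Z = "gw_generation d t"
  have \<mu>: "\<mu> > 1" using supercritical by (simp add: \<mu>_def)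
  have v: "0 \<le> v" "v \<le> a * \<mu>"
    using variance_pmf_nonneg[OF fin] variance by (simp_all add: v_def \<mu>_def)
  then have "0 \<le> a * \<mu>" by linarith
  then have a: "a \<ge> 0" using \<mu> by (simp add: zero_le_mult_iff)
  have "\<mu> ^ t \<le> \<mu> ^ (2 * t)" using \<mu> by (intro power_increasing) auto
  then have "v * (\<mu> ^ (2 * t) - \<mu> ^ t) \<le> (a * \<mu>) * \<mu> ^ (2 * t)"
    using v a \<mu> by (intro mult_mono) auto
  then have "moment2_pmf ?Z \<le> \<mu> ^ (2 * t) + (a * \<mu>) * \<mu> ^ (2 * t) / (\<mu> * (\<mu> - 1))"
    using \<mu> unfolding moment2_gw_generation[OF fin supercritical] \<mu>_def[symmetric] v_def[symmetric]
    by (intro add_left_mono divide_right_mono) auto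
  also have "\<dots> = \<mu> ^ (2 * t) * ((\<mu> - 1 + a) / (\<mu> - 1))"
    using \<mu> by (simp add: field_simps)
  finally have m2: "moment2_pmf ?Z \<le> \<mu> ^ (2 * t) * ((\<mu> - 1 + a) / (\<mu> - 1))" .
  have mean: "mean_pmf ?Z = \<mu> ^ t" by (simp add: mean_gw_generation[OF fin] \<mu>_def)
  have "(\<mu> - 1) / (4 * (\<mu> - 1 + a)) = (1 - 1 / 2) ^ 2 * \<mu> ^ (2 * t) / (\<mu> ^ (2 * t) * ((\<mu> - 1 + a) / (\<mu> - 1)))"
  proof -
    have scale: "(\<mu> - 1) / (4 * (\<mu> - 1 + a)) = (1 - 1 / 2) ^ 2 * X / (X * ((\<mu> - 1 + a) / (\<mu> - 1)))"
      if "X > 0" for X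
      using that \<mu> a by (simp add: power2_eq_square)
    show ?thesis using \<mu> by (intro scale) simp
  qed
  also have "\<dots> \<le> (1 - 1 / 2) ^ 2 * mean_pmf ?Z ^ 2 / moment2_pmf ?Z"
  proof -
    have sq: "mean_pmf ?Z ^ 2 = \<mu> ^ (2 * t)" by (simp add: mean power_mult[symmetric] mult.commute)
    have moment2_pos: "moment2_pmf ?Z > 0"
      using mean_le_moment2_pmf[OF finite_set_pmf_gw_generation[OF fin], of t] \<mu> mean
      by (smt (verit) zero_less_power)
    have bound_pos: "\<mu> ^ (2 * t) * ((\<mu> - 1 + a) / (\<mu> - 1)) > 0" using \<mu> a by simp
    show ?thesis
      unfolding sq by (rule divide_left_mono[OF m2 _ mult_pos_pos[OF bound_pos moment2_pos]]) simp
  qed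
  also have "\<dots> \<le> measure_pmf.prob ?Z {m. real m \<ge> 1 / 2 * mean_pmf ?Z}"
    using \<mu> by (intro paley_zygmund_pmf finite_set_pmf_gw_generation fin) (auto simp: mean)
  finally show ?thesis by (simp add: mean \<mu>_def)
qed

lemma mean_scale_pmf: "mean_pmf (scale_pmf a Z) = a * mean_pmf Z"
  unfolding scale_pmf_def by simp

lemma variance_scale_pmf: "variance_pmf (scale_pmf a Z) = a ^ 2 * variance_pmf Z"
  unfolding variance_pmf_def scale_pmf_def by (simp add: power_mult_distrib algebra_simps)

lemma binomial_pmf_eq_iid_sum_pmf:
  assumes "p \<in> {0..1}"
  shows "binomial_pmf n p = iid_sum_pmf (map_pmf of_bool (bernoulli_pmf p)) n"
  by (induction n) (use assms in \<open>simp_all add: binomial_pmf_0 binomial_pmf_Suc map_pmf_def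
      bind_assoc_pmf bind_return_pmf of_bool_def\<close>)

lemma mean_binomial_pmf:
  assumes "p \<in> {0..1}"
  shows "mean_pmf (binomial_pmf n p) = n * p"
  using assms by (simp add: binomial_pmf_eq_iid_sum_pmf mean_iid_sum_pmf)

lemma variance_binomial_pmf:
  assumes "p \<in> {0..1}"
  shows "variance_pmf (binomial_pmf n p) = n * p * (1 - p)"
proof -
  have "variance_pmf (map_pmf of_bool (bernoulli_pmf p) :: nat pmf) = p * (1 - p)"
    using assms by (simp add: variance_pmf_def power2_eq_square algebra_simps)
  then show ?thesis
    using assms mean_binomial_pmf[OF assms, of n]
    by (simp add: variance_pmf_def binomial_pmf_eq_iid_sum_pmf moment2_iid_sum_pmf)
qed

lemma variance_scale_binomial_pmf_le:
  assumes "p \<in> {0..1}"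
  shows "variance_pmf (scale_pmf a (binomial_pmf n p)) \<le> a * mean_pmf (scale_pmf a (binomial_pmf n p))"
proof -
  have "real a ^ 2 * (n * p * (1 - p)) \<le> real a ^ 2 * (n * p)"
    using assms by (intro mult_left_mono) (auto simp: mult_left_le)
  then show ?thesis
    using assms by (simp add: variance_scale_pmf mean_scale_pmf variance_binomial_pmf
        mean_binomial_pmf power2_eq_square mult_ac)
qed

lemma two_le_binomial:
  assumes "0 < j" "j < k"
  shows "2 \<le> k choose j"
proof -
  have "1 < (real k / real j) ^ j" using assms by (intro one_less_power) auto
  also have "\<dots> \<le> real (k choose j)" using assms by (intro binomial_ge_n_over_k_pow_k) simp
  finally show ?thesis by linarith
qed

lemma ln_ge_of_ge_one_plus:
  fixes \<mu> e \<eta> :: real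
  assumes "1 + e * (1 - \<eta>) \<le> \<mu>" "0 \<le> e" "e \<le> \<eta>" "\<eta> \<le> 1 / 2"
  shows "e * (1 - 2 * \<eta>) \<le> ln \<mu>"
proof -
  define u where "u = e * (1 - \<eta>)"
  have u: "0 \<le> u" "u \<le> e" using assms by (auto simp: u_def mult_left_le)
  have "e * (1 - 2 * \<eta>) \<le> e * (1 - \<eta>) * (1 - \<eta>)"
    using assms by (simp add: algebra_simps power2_eq_square)
  also have "\<dots> \<le> u * (1 - u)"
    unfolding u_def using assms u by (intro mult_left_mono) (auto simp: u_def)
  also have "\<dots> = u - u ^ 2" by (simp add: algebra_simps power2_eq_square)
  also have "\<dots> \<le> ln (1 + u)" using u assms by (intro ln_one_plus_pos_lower_bound) auto
  also have "\<dots> \<le> ln \<mu>" using assms u by (subst ln_le_cancel_iff) (auto simp: u_def)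
  finally show ?thesis .
qed

lemma floor_scaled_mean_ge:
  fixes B e es \<eta> :: real
  assumes "0 < B" "0 \<le> es" "es + 1 / B \<le> \<eta> / 2 * e" "0 \<le> e" "e \<le> 1" "0 \<le> \<eta>" "\<eta> \<le> 1"
  shows "1 + e * (1 - \<eta>) \<le> real (nat \<lfloor>(1 - es) * B\<rfloor>) * (1 + e) / B"
proof -
  have "\<eta> * e \<le> 1" "0 \<le> 1 / B" using assms by (auto intro: mult_le_one)
  then have "es \<le> 1" using assms by linarith
  then have "(1 - es) * B - 1 \<le> real (nat \<lfloor>(1 - es) * B\<rfloor>)" using assms by linarith
  then have "((1 - es) * B - 1) * (1 + e) / B \<le> real (nat \<lfloor>(1 - es) * B\<rfloor>) * (1 + e) / B"
    using assms by (intro divide_right_mono mult_right_mono) auto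
  moreover have "((1 - es) * B - 1) * (1 + e) / B = (1 - (es + 1 / B)) * (1 + e)"
    using assms by (simp add: field_simps)
  moreover have "1 + e * (1 - \<eta>) \<le> (1 - \<eta> / 2 * e) * (1 + e)"
    using assms mult_left_le[of e "\<eta> / 2 * e"] by (simp add: algebra_simps)
  moreover have "(1 - \<eta> / 2 * e) * (1 + e) \<le> (1 - (es + 1 / B)) * (1 + e)"
    using assms by (intro mult_right_mono) auto
  ultimately show ?thesis by linarith
qed

lemma div_four_add_le:
  fixes e u a :: real
  assumes "e / 2 \<le> u" "0 < e" "e \<le> 1" "0 \<le> a"
  shows "e / (4 + 8 * a) \<le> u / (4 * (u + a))"
proof -
  have "e * u \<le> 1 * u" "e * a \<le> (2 * u) * a" using assms by (auto intro!: mult_right_mono)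
  moreover have "0 < 4 + 8 * a" "0 < u + a" using assms by auto
  ultimately show ?thesis by (simp add: field_simps)
qed

lemma power_floor_ln_ge:
  fixes n :: nat and \<mu> e \<eta> b c :: real
  assumes ln_\<mu>: "e * (1 - 2 * \<eta>) \<le> ln \<mu>" and "0 < \<mu>" and e: "0 < e" "e \<le> 1"
    and \<eta>: "0 \<le> \<eta>" "\<eta> \<le> 1 / 2" "4 * (b + c) * \<eta> \<le> c" and bc: "0 \<le> b" "0 < c"
    and n: "0 < n" "1 + ln 2 \<le> c / 2 * ln (real n)"
  shows "2 * real n powr b \<le> \<mu> ^ nat \<lfloor>(b + c) / e * ln (real n)\<rfloor>"
proof -
  define L where "L = ln (real n)"
  define x where "x = nat \<lfloor>(b + c) / e * L\<rfloor>"
  have L: "0 \<le> L" using n by (simp add: L_def)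
  have x: "(b + c) / e * L - 1 \<le> real x"
    unfolding x_def using bc e L by (simp add: of_nat_nat)
  have "b + c / 2 \<le> (b + c) * (1 - 2 * \<eta>)" using \<eta> by (simp add: algebra_simps)
  then have "b * L + c / 2 * L \<le> (b + c) * (1 - 2 * \<eta>) * L"
    using L by (metis distrib_right mult_right_mono)
  then have "ln 2 + b * L \<le> (b + c) * (1 - 2 * \<eta>) * L - 1"
    using n unfolding L_def by linarith
  also have "\<dots> = ((b + c) / e * L - 1) * (e * (1 - 2 * \<eta>)) + e * (1 - 2 * \<eta>) - 1"
    using e by (simp add: field_simps)
  also have "\<dots> \<le> real x * ln \<mu> + e * (1 - 2 * \<eta>) - 1"
    using x e \<eta> ln_\<mu> bc L by (intro add_right_mono diff_right_mono mult_mono) auto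
  also have "\<dots> \<le> real x * ln \<mu>"
  proof -
    have "0 \<le> \<eta> * e" using e \<eta> by simp
    then show ?thesis using e by (simp add: algebra_simps)
  qed
  finally have "exp (ln 2 + b * L) \<le> exp (real x * ln \<mu>)" by simp
  also have "\<dots> = \<mu> ^ x" using \<open>0 < \<mu>\<close> by (simp add: exp_of_nat_mult)
  finally show ?thesis
    using n by (simp add: x_def L_def exp_add powr_def mult.commute)
qed

lemma gw_generation_binomial_offspring_tail:
  fixes j k n :: nat and \<delta> c e es \<eta> :: real
  assumes jk: "1 \<le> j" "j < k" and \<delta>: "0 < \<delta>" and c: "0 < c"
    and \<eta>: "0 < \<eta>" "\<eta> \<le> 1 / 2" "4 * (real j - 1 + \<delta> + c) * \<eta> \<le> c"
    and e: "0 < e" "e \<le> \<eta>"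
    and es: "0 \<le> es" "es + 1 / real (n choose (k - j)) \<le> \<eta> / 2 * e"
    and n: "k \<le> n" "4 + 8 * (real (k choose j) - 1) \<le> real n powr c"
      "1 + ln 2 \<le> c / 2 * ln (real n)"
  shows "let p0 = 1 / ((real (k choose j) - 1) * real (n choose (k - j)));
          p = (1 + e) * p0;
          N = nat \<lfloor>(1 - es) * real (n choose (k - j))\<rfloor>;
          offspring = scale_pmf ((k choose j) - 1) (binomial_pmf N p);
          x = nat \<lfloor>(real j - 1 + \<delta> + c) / e * ln (real n)\<rfloor>
      in measure_pmf.prob (gw_generation offspring x)
           {m. real m \<ge> real n powr (real j - 1 + \<delta>)} \<ge> e / real n powr c"
proof -
  define A where "A = real (k choose j) - 1"
  define B where "B = real (n choose (k - j))"
  define N where "N = nat \<lfloor>(1 - es) * B\<rfloor>"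
  define p where "p = (1 + e) * (1 / (A * B))"
  define d where "d = scale_pmf ((k choose j) - 1) (binomial_pmf N p)"
  define b where "b = real j - 1 + \<delta>"
  define x where "x = nat \<lfloor>(b + c) / e * ln (real n)\<rfloor>"
  define \<mu> where "\<mu> = mean_pmf d"
  have A: "1 \<le> A" "real ((k choose j) - 1) = A"
    using two_le_binomial[of j k] jk by (auto simp: A_def of_nat_diff)
  have "\<eta> * e \<le> 1 / 2 * (1 / 2)" using \<eta> e by (intro mult_mono) auto
  then have "1 / B \<le> 1 / 8" using es unfolding B_def by linarith
  moreover have "0 < B" using n by (simp add: B_def)
  ultimately have B: "8 \<le> B" by (simp add: field_simps)
  have "1 + e \<le> A * B" using mult_mono[of 1 A 8 B] A B e \<eta> by simp
  then have p: "p \<in> {0..1}" using A B e by (simp add: p_def)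
  have fin: "finite (set_pmf d)"
    using finite_set_pmf_binomial_pmf[OF p] by (simp add: d_def scale_pmf_def)
  have \<mu>_eq: "\<mu> = real N * (1 + e) / B"
    using A B by (simp add: \<mu>_def d_def mean_scale_pmf mean_binomial_pmf[OF p]) (simp add: p_def)
  have \<mu>: "1 + e * (1 - \<eta>) \<le> \<mu>"
    unfolding \<mu>_eq N_def using B es[folded B_def] e \<eta> by (intro floor_scaled_mean_ge) auto
  have "e * (1 / 2) \<le> e * (1 - \<eta>)" using e \<eta> by (intro mult_left_mono) auto
  then have \<mu>_gt: "e / 2 \<le> \<mu> - 1" using \<mu> by linarith
  have "0 < 4 + 8 * A" "4 + 8 * A \<le> real n powr c" using A n(2) by (auto simp: A_def)
  then have "e / real n powr c \<le> e / (4 + 8 * A)"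
    using e by (intro divide_left_mono mult_pos_pos) linarith+
  also have "\<dots> \<le> (\<mu> - 1) / (4 * (\<mu> - 1 + A))"
    using \<mu>_gt A e \<eta> by (intro div_four_add_le) auto
  also have "\<dots> \<le> measure_pmf.prob (gw_generation d x) {m. \<mu> ^ x / 2 \<le> real m}"
    using fin \<mu>_gt e variance_scale_binomial_pmf_le[OF p, of "(k choose j) - 1" N]
    unfolding \<mu>_def d_def A(2) by (intro gw_generation_prob_ge_half_mean) auto
  also have "\<dots> \<le> measure_pmf.prob (gw_generation d x) {m. real n powr b \<le> real m}"
  proof (intro measure_pmf.finite_measure_mono subsetI)
    have "2 * real n powr b \<le> \<mu> ^ x"
      unfolding x_def using \<mu> \<mu>_gt e \<eta> \<delta> c jk n
      by (intro power_floor_ln_ge ln_ge_of_ge_one_plus) (auto simp: b_def)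
    then show "m \<in> {m. real n powr b \<le> real m}" if "m \<in> {m. \<mu> ^ x / 2 \<le> real m}" for m
      using that by auto
  qed simp
  finally show ?thesis
    unfolding Let_def b_def x_def d_def p_def N_def A_def B_def by simp
qed

lemma eventually_pos_of_cube_mult_at_top:
  fixes f g :: "'a \<Rightarrow> real"
  assumes "filterlim (\<lambda>x. f x ^ 3 * g x) at_top F" "\<And>x. 0 \<le> g x"
  shows "eventually (\<lambda>x. 0 < f x) F"
proof -
  have "eventually (\<lambda>x. 0 < f x ^ 3 * g x) F"
    using assms(1) by (simp add: filterlim_at_top_dense)
  then show ?thesis
  proof eventually_elim
    case (elim x)
    with assms(2)[of x] show ?case by (auto simp: zero_less_mult_iff)
  qed
qed

lemma binomial_ge_div:
  assumes "0 < r" "r \<le> n"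
  shows "real n / real r \<le> real (n choose r)"
proof -
  have "real n / real r \<le> (real n / real r) ^ r"
    using assms by (intro power_increasing[of 1 r, simplified]) auto
  also have "\<dots> \<le> real (n choose r)" using assms by (intro binomial_ge_n_over_k_pow_k) simp
  finally show ?thesis .
qed

lemma eventually_inverse_binomial_le:
  fixes \<epsilon> :: "nat \<Rightarrow> real" and \<delta> \<theta> :: real
  assumes "filterlim (\<lambda>n. \<epsilon> n ^ 2 * real n powr (1 - 2 * \<delta>)) at_top sequentially"
    and "eventually (\<lambda>n. 0 < \<epsilon> n) sequentially" and "0 \<le> \<delta>" "0 < \<theta>" "0 < r"
  shows "eventually (\<lambda>n. 1 / real (n choose r) \<le> \<theta> * \<epsilon> n) sequentially"
  using assms(1)[unfolded filterlim_at_top_dense, rule_format, of "(r / \<theta>) ^ 2"] assms(2)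
    eventually_ge_at_top[of r]
proof eventually_elim
  case (elim n)
  have n: "1 \<le> real n" using elim assms(5) by simp
  have "(r / \<theta>) ^ 2 < \<epsilon> n ^ 2 * real n powr (1 - 2 * \<delta>)" using elim by simp
  also have "\<dots> \<le> \<epsilon> n ^ 2 * real n powr 2"
    using n assms(3) by (intro mult_left_mono powr_mono) auto
  also have "\<dots> = (\<epsilon> n * real n) ^ 2" using n by (simp add: power_mult_distrib powr_realpow)
  finally have "r / \<theta> < \<epsilon> n * real n"
    by (rule power_less_imp_less_base) (use elim n in simp)
  then have "real r / real n \<le> \<theta> * \<epsilon> n"
    using assms(4) n by (simp add: field_simps)
  moreover have "0 < real n / real r" using n assms(5) by simp
  then have "1 / real (n choose r) \<le> 1 / (real n / real r)"
    using binomial_ge_div[OF assms(5) elim(3)] by (intro divide_left_mono mult_pos_pos) linarith+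
  ultimately show ?case by simp
qed

theorem lemma7p3:
  fixes j k :: nat and \<delta> c :: real
    and \<epsilon> \<epsilon>s :: "nat \<Rightarrow> real"
  assumes "1 \<le> j" "j < k"
    and "0 < \<delta>" "\<delta> < 1/6" "0 < c"
    and "\<epsilon> \<longlonglongrightarrow> 0"
    and "filterlim (\<lambda>n. \<epsilon> n ^ 3 * real n ^ j) at_top sequentially"
    and "filterlim (\<lambda>n. \<epsilon> n ^ 2 * real n powr (1 - 2 * \<delta>)) at_top sequentially"
    and "eventually (\<lambda>n. \<epsilon>s n > 0) sequentially"
    and "(\<lambda>n. real n powr (-1/2 + \<delta>) / \<epsilon>s n) \<longlonglongrightarrow> 0"
    and "(\<lambda>n. \<epsilon>s n / \<epsilon> n) \<longlonglongrightarrow> 0"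
  shows "eventually (\<lambda>n.
      let p0 = 1 / ((real (k choose j) - 1) * real (n choose (k - j)));
          p = (1 + \<epsilon> n) * p0;
          N = nat \<lfloor>(1 - \<epsilon>s n) * real (n choose (k - j))\<rfloor>;
          offspring = scale_pmf ((k choose j) - 1) (binomial_pmf N p);
          x = nat \<lfloor>(real j - 1 + \<delta> + c) / \<epsilon> n * ln (real n)\<rfloor>
      in measure_pmf.prob (gw_generation offspring x)
           {m. real m \<ge> real n powr (real j - 1 + \<delta>)} \<ge> \<epsilon> n / real n powr c)
    sequentially"
proof -
  define \<eta> where "\<eta> = min (1 / 2) (c / (4 * (real j - 1 + \<delta> + c)))"
  have \<eta>: "0 < \<eta>" "\<eta> \<le> 1 / 2" "4 * (real j - 1 + \<delta> + c) * \<eta> \<le> c"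
    using assms by (auto simp: \<eta>_def min_le_iff_disj field_simps)
  have \<epsilon>_pos: "eventually (\<lambda>n. 0 < \<epsilon> n) sequentially"
    using assms(7) by (rule eventually_pos_of_cube_mult_at_top) simp
  have "eventually (\<lambda>n. 1 / real (n choose (k - j)) \<le> \<eta> / 4 * \<epsilon> n) sequentially"
    using assms \<eta> by (intro eventually_inverse_binomial_le[OF assms(8) \<epsilon>_pos]) auto
  moreover have "eventually (\<lambda>n. \<epsilon>s n / \<epsilon> n < \<eta> / 4) sequentially"
    using \<eta> by (intro order_tendstoD(2)[OF assms(11)]) simp
  moreover have "eventually (\<lambda>n. \<epsilon> n < \<eta>) sequentially"
    using \<eta> by (intro order_tendstoD(2)[OF assms(6)])
  moreover have "eventually (\<lambda>n. 4 + 8 * (real (k choose j) - 1) \<le> real n powr c) sequentially"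
    "eventually (\<lambda>n. 1 + ln 2 \<le> c / 2 * ln (real n)) sequentially"
    using assms(5) by real_asymp+
  ultimately show ?thesis
    using \<epsilon>_pos assms(9) eventually_ge_at_top[of k]
  proof eventually_elim
    case (elim n)
    then have "\<epsilon>s n \<le> \<eta> / 4 * \<epsilon> n" by (simp add: field_simps)
    with elim show ?case
      using assms \<eta> by (intro gw_generation_binomial_offspring_tail) auto
  qed
qed

end
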